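(* Let $\mathbf{B}$ be a binomial ring and $n\ge0$. The Ariadne functor $A_n\colon\mathfrak{Laby}\to\mathfrak{MSet}_n$ factors through the quotient category $\mathfrak{Laby}_n$, producing a functor $A_n\colon\mathfrak{Laby}_n\to\mathfrak{MSet}_n$.
   Context: Binomial ring: commutative unital, torsion-free as an abelian group, with $\binom ak=a(a-1)\cdots(a-k+1)/k!\in\mathbf{B}$ for all $a\in\mathbf{B}$, $k\ge0$. Multi-sets, multations, $\mathfrak{MSet}_n$: a multi-set is a finite set with positive integer multiplicities, $|A|$ the sum of multiplicities. A multation $\mu\colon A\to B$ ($|A|=|B|=n$) is a multi-set of pairs with first-coordinate multi-set $A$ and second-coordinate multi-set $B$. $\mathfrak{MSet}_n$ has objects formal direct sums of multi-sets of cardinality $n$, morphisms the free $\mathbf{B}$-modules on multations, composition $\mu\circ\nu=\sum_K\frac{\prod_{(a,c)}m_{K_{13}}(a,c)!}{\prod m_K(a,b,c)!}K_{13}$ over multi-sets of triples $K$ with $(1,2)$-projection $\nu$ and $(2,3)$-projection $\mu$. $\prod_j[a_j;b_j]^{[m_j]}$ (distinct pairs) is the multation with $(a_j,b_j)$ of multiplicity $m_j$, with $[a;b]^{[i]}[a;b]^{[j]}=\binom{i+j}i[a;b]^{[i+j]}$. Mazes, $\mathfrak{Laby}$: a passage $p\colon x\to y$ carries label $\overline p\in\mathbf{B}$; a maze $P\colon X\to Y$ between finite sets is a finite multi-set of passages with every element of $X$ a source and of $Y$ a target; $|P|$ is its number of passages with multiplicity. $\mathfrak{Laby}$: objects formal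 finite direct sums of finite sets; morphisms generated by mazes modulo $P\cup\{x\xrightarrow0y\}=0$ and $P\cup\{x\xrightarrow{a+b}y\}=P\cup\{x\xrightarrow ay\}+P\cup\{x\xrightarrow by\}+P\cup\{x\xrightarrow ay,x\xrightarrow by\}$; composition $P\circ Q=\sum_{U\sqsubseteq P\boxtimes Q}U$ ($U$ a sub-multi-set of composable pairs using every passage occurrence of $P$ and $Q$, read as the maze with passages $x\xrightarrow{\overline p\overline q}z$). $\mathfrak{Laby}_n$ is the quotient of $\mathfrak{Laby}$ by (III) $P=0$ whenever $|P|>n$ and (IV) $P=\sum_d\prod_p\binom{\overline p}{d_p}I_d$, $d$ ranging over assignments of integers $d_p\ge1$ to the passage occurrences $p$ of $P$, $I_d$ the maze with $d_p$ passages from the source to the target of $p$ labelled $1$. Ariadne functor: $A_n(X)=\bigoplus_AA$ over multi-sets $A$ with support exactly $X$ and $|A|=n$; for a maze $P$ with passage occurrences $p\colon x_p\to y_p$, $A_n(P)=\sum_d\prod_p\overline p^{\,d_p}[x_p;y_p]^{[d_p]}$ over $d_p\ge1$ with $\sum d_p=n$. *)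

theory Defs
  imports Main "HOL-Library.Multiset"
begin

text \<open>A binomial ring: commutative unital, torsion-free as an abelian group,
  and closed under the binomial operations a choose k.\<close>

class binomial_ring = comm_ring_1 +
  assumes torsion_free: "\<And>(k::nat) a. 0 < k \<Longrightarrow> of_nat k * a = 0 \<Longrightarrow> a = 0"
  and binom_closed: "\<And>a (k::nat). \<exists>c. of_nat (fact k) * c = (\<Prod>i<k. a - of_nat i)"

definition bchoose :: "'b::binomial_ring \<Rightarrow> nat \<Rightarrow> 'b" where
  "bchoose a k = (THE c. of_nat (fact k) * c = (\<Prod>i<k. a - of_nat i))"

text \<open>A passage x -> y with label l is the triple (x, l, y).\<close>
type_synonym ('a, 'b) passage = "'a \<times> 'b \<times> 'a"
type_synonym ('a, 'b) maze = "('a, 'b) passage multiset"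
text \<open>Formal B-linear combinations of mazes (finitely supported functions).\<close>
type_synonym ('a, 'b) laby = "('a, 'b) maze \<Rightarrow> 'b"
text \<open>Multations A -> B: multi-sets of pairs; morphisms of MSet_n are
  finitely supported B-valued functions on multations.\<close>
type_synonym 'a multation = "('a \<times> 'a) multiset"

definition src :: "('a, 'b) passage \<Rightarrow> 'a" where "src p = fst p"
definition lbl :: "('a, 'b) passage \<Rightarrow> 'b" where "lbl p = fst (snd p)"
definition tgt :: "('a, 'b) passage \<Rightarrow> 'a" where "tgt p = snd (snd p)"

definition is_maze :: "'a set \<Rightarrow> 'a set \<Rightarrow> ('a, 'b) maze \<Rightarrow> bool" where
  "is_maze X Y P \<longleftrightarrow> src ` set_mset P = X \<and> tgt ` set_mset P = Y"

definition maze_list :: "('a, 'b) maze \<Rightarrow> ('a, 'b) passage list" where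
  "maze_list P = (SOME ps. mset ps = P)"

text \<open>Sub-multi-sets U of P \<boxtimes> Q using every passage occurrence, with occurrences
  distinguished by their index in an enumeration (ps for P, qs for Q).\<close>
definition comp_index_sets ::
  "('a, 'b) passage list \<Rightarrow> ('a, 'b) passage list \<Rightarrow> (nat \<times> nat) set set" where
  "comp_index_sets ps qs =
     {U. U \<subseteq> {(i, j). i < length ps \<and> j < length qs \<and> src (ps ! i) = tgt (qs ! j)}
         \<and> fst ` U = {..<length ps} \<and> snd ` U = {..<length qs}}"

definition comp_result ::
  "('a, 'b::times) passage list \<Rightarrow> ('a, 'b) passage list \<Rightarrow> (nat \<times> nat) set \<Rightarrow> ('a, 'b) maze" where
  "comp_result ps qs U =
     image_mset (\<lambda>(i, j). (src (qs ! j), lbl (ps ! i) * lbl (qs ! j), tgt (ps ! i))) (mset_set U)"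

text \<open>Composition P \<circ> Q of mazes (Q first), as a formal combination.\<close>
definition maze_comp :: "('a, 'b::comm_ring_1) maze \<Rightarrow> ('a, 'b) maze \<Rightarrow> ('a, 'b) laby" where
  "maze_comp P Q M =
     of_nat (card {U \<in> comp_index_sets (maze_list P) (maze_list Q).
                     comp_result (maze_list P) (maze_list Q) U = M})"

definition supp :: "('a, 'b::zero) laby \<Rightarrow> ('a, 'b) maze set" where
  "supp F = {P. F P \<noteq> 0}"

text \<open>Morphisms X -> Y of the free category underlying Laby.\<close>
definition laby_mor :: "'a set \<Rightarrow> 'a set \<Rightarrow> ('a, 'b::zero) laby \<Rightarrow> bool" where
  "laby_mor X Y F \<longleftrightarrow> finite (supp F) \<and> (\<forall>P \<in> supp F. is_maze X Y P)"

definition laby_comp :: "('a, 'b::comm_ring_1) laby \<Rightarrow> ('a, 'b) laby \<Rightarrow> ('a, 'b) laby" where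
  "laby_comp F G M = (\<Sum>P\<in>supp F. \<Sum>Q\<in>supp G. F P * G Q * maze_comp P Q M)"

definition maze_comb :: "('a, 'b) maze \<Rightarrow> ('a, 'b::{zero,one}) laby" where
  "maze_comb P M = (if M = P then 1 else 0)"

definition assignments :: "nat \<Rightarrow> 'c list \<Rightarrow> nat list set" where
  "assignments m ps = {ds. length ds = length ps \<and> (\<forall>d\<in>set ds. 1 \<le> d) \<and> sum_list ds \<le> m}"

definition unit_maze :: "('a, 'b::one) passage list \<Rightarrow> nat list \<Rightarrow> ('a, 'b) maze" where
  "unit_maze ps ds = mset (concat (map2 (\<lambda>p d. replicate d (src p, 1, tgt p)) ps ds))"

text \<open>Relation (IV), truncated to assignments with total \<le> n (the remaining terms
  vanish by relation (III)).\<close>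
definition rel_IV :: "nat \<Rightarrow> ('a, 'b::binomial_ring) maze \<Rightarrow> ('a, 'b) laby" where
  "rel_IV n P M =
     maze_comb P M -
     (\<Sum>ds\<in>assignments n (maze_list P).
        (\<Prod>(p, d)\<leftarrow>zip (maze_list P) ds. bchoose (lbl p) d) * maze_comb (unit_maze (maze_list P) ds) M)"

definition laby_n_rel :: "nat \<Rightarrow> 'a set \<Rightarrow> 'a set \<Rightarrow> ('a, 'b::binomial_ring) laby set" where
  "laby_n_rel n X Y =
     {maze_comb P | P. is_maze X Y P \<and> size P > n} \<union> {rel_IV n P | P. is_maze X Y P}"

definition multation_of :: "('a, 'b) passage list \<Rightarrow> nat list \<Rightarrow> 'a multation" where
  "multation_of ps ds = sum_list (map2 (\<lambda>p d. replicate_mset d (src p, tgt p)) ps ds)"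

text \<open>Coefficient of the product of divided powers: prod_{(a,b)} m(a,b)! / prod_p d_p!.\<close>
definition dp_coeff :: "'a multation \<Rightarrow> nat list \<Rightarrow> nat" where
  "dp_coeff mu ds = (\<Prod>ab\<in>set_mset mu. fact (count mu ab)) div (\<Prod>d\<leftarrow>ds. fact d)"

definition ariadne :: "nat \<Rightarrow> ('a, 'b::comm_ring_1) maze \<Rightarrow> 'a multation \<Rightarrow> 'b" where
  "ariadne n P mu =
     (\<Sum>ds\<in>{ds\<in>assignments n (maze_list P). sum_list ds = n \<and> multation_of (maze_list P) ds = mu}.
        (\<Prod>(p, d)\<leftarrow>zip (maze_list P) ds. lbl p ^ d) * of_nat (dp_coeff mu ds))"

definition ariadne_mor :: "nat \<Rightarrow> ('a, 'b::comm_ring_1) laby \<Rightarrow> 'a multation \<Rightarrow> 'b" where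
  "ariadne_mor n F mu = (\<Sum>P\<in>supp F. F P * ariadne n P mu)"

end

theory Submission
  imports
    Defs
    "HOL-Combinatorics.Stirling"
    "HOL-Combinatorics.Permutations"
    "HOL-Library.FuncSet"
begin

text \<open>
  Enumerate a multation \<open>\<mu>\<close> of size \<open>n\<close> by a map \<open>\<tau>\<close> from an \<open>n\<close>-set \<open>T\<close>. The coefficient
  of \<open>\<mu>\<close> in \<open>A\<^sub>n(P)\<close> is the number of covers of \<open>P\<close> by \<open>T\<close>, that is, maps sending each \<open>t\<close>
  to a passage occurrence with endpoints \<open>\<tau> t\<close> and hitting every occurrence, each
  weighted by the product of the labels it picks up: the divided-power coefficients
  count exactly the ways of distributing equal pairs among the occurrences.
  A cover of a composite maze is the same as a choice of intermediate points together
  with covers of the two factors, so \<open>A\<^sub>n\<close> of a composite is a sum over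
  intermediate points of products, as for matrices. It therefore suffices that the
  generators of the relations have vanishing coefficients. A maze with more than \<open>n\<close>
  passages has no cover by \<open>n\<close> points. For relation (IV), a passage with label \<open>a\<close>
  absorbing \<open>k\<close> equal pairs contributes \<open>a\<^sup>k\<close>, while its replacement by \<open>d\<close> parallel
  unit passages, weighted by \<open>a choose d\<close>, contributes \<open>\<Sum>\<^sub>d (a choose d) d! S(k, d)\<close>,
  where \<open>d! S(k, d)\<close> counts surjections onto \<open>d\<close> points; the two agree by the
  identity \<open>a\<^sup>k = \<Sum>\<^sub>d S(k, d) a (a - 1) \<cdots> (a - d + 1)\<close>.
\<close>

lemma sum_Cons_image_Sigma:
  assumes "finite A" and "\<And>a. a \<in> A \<Longrightarrow> finite (B a)"
  shows "(\<Sum>xs\<in>(\<lambda>(x, xs). x # xs) ` (SIGMA x:A. B x). f xs) = (\<Sum>x\<in>A. \<Sum>xs\<in>B x. f (x # xs))"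
proof -
  have "inj_on (\<lambda>(x, xs). x # xs) (SIGMA x:A. B x)"
    by (auto simp: inj_on_def)
  then have "(\<Sum>xs\<in>(\<lambda>(x, xs). x # xs) ` (SIGMA x:A. B x). f xs) = (\<Sum>(x, xs)\<in>(SIGMA x:A. B x). f (x # xs))"
    by (subst sum.reindex) (simp_all add: case_prod_unfold)
  also have "\<dots> = (\<Sum>x\<in>A. \<Sum>xs\<in>B x. f (x # xs))"
    by (rule sum.Sigma[symmetric]) (use assms in auto)
  finally show ?thesis .
qed

lemma sum_atLeast1_triangle:
  fixes f :: "nat \<Rightarrow> nat \<Rightarrow> 'b::comm_monoid_add"
  shows "(\<Sum>j\<in>{1..c}. \<Sum>i\<le>c - j. f j (i + j)) = (\<Sum>k\<le>c. \<Sum>j\<in>{1..k}. f j k)"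
proof -
  have "(\<Sum>j\<in>{1..c}. \<Sum>i\<le>c - j. f j (i + j)) = (\<Sum>j\<in>{1..c}. \<Sum>k\<in>{k\<in>{..c}. j \<le> k}. f j k)"
  proof (rule sum.cong[OF refl])
    fix j assume "j \<in> {1..c}"
    then show "(\<Sum>i\<le>c - j. f j (i + j)) = (\<Sum>k\<in>{k\<in>{..c}. j \<le> k}. f j k)"
      by (intro sum.reindex_bij_witness[of _ "\<lambda>k. k - j" "\<lambda>i. i + j"]) auto
  qed
  also have "\<dots> = (\<Sum>k\<le>c. \<Sum>j\<in>{j\<in>{1..c}. j \<le> k}. f j k)"
    by (rule sum.swap_restrict) auto
  also have "\<dots> = (\<Sum>k\<le>c. \<Sum>j\<in>{1..k}. f j k)"
    by (intro sum.cong refl) auto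
  finally show ?thesis .
qed

lemma sum_nonempty_subsets_card:
  assumes fA: "finite A"
  shows "(\<Sum>K\<in>{K. K \<subseteq> A \<and> K \<noteq> {}}. F (card K)) = (\<Sum>k\<in>{1..card A}. of_nat (card A choose k) * F k)"
proof -
  have fS: "finite {K. K \<subseteq> A \<and> K \<noteq> {}}" by (rule finite_subset[of _ "Pow A"]) (use fA in auto)
  have sub: "card ` {K. K \<subseteq> A \<and> K \<noteq> {}} \<subseteq> {1..card A}"
    using fA by (auto simp: card_mono Suc_le_eq card_gt_0_iff dest: finite_subset)
  have "(\<Sum>K\<in>{K. K \<subseteq> A \<and> K \<noteq> {}}. F (card K)) =
        (\<Sum>k\<in>{1..card A}. \<Sum>K\<in>{K. K \<in> {K. K \<subseteq> A \<and> K \<noteq> {}} \<and> card K = k}. F (card K))"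
    by (rule sum.group[symmetric, OF fS _ sub]) simp
  also have "\<dots> = (\<Sum>k\<in>{1..card A}. of_nat (card A choose k) * F k)"
  proof (rule sum.cong[OF refl])
    fix k assume k: "k \<in> {1..card A}"
    have eq: "{K. K \<in> {K. K \<subseteq> A \<and> K \<noteq> {}} \<and> card K = k} = {K. K \<subseteq> A \<and> card K = k}"
      using k by auto
    show "(\<Sum>K\<in>{K. K \<in> {K. K \<subseteq> A \<and> K \<noteq> {}} \<and> card K = k}. F (card K)) = of_nat (card A choose k) * F k"
      unfolding eq using n_subsets[OF fA, of k] by (simp add: mult_of_nat_commute)
  qed
  finally show ?thesis .
qed

lemma replicate_mset_add: "replicate_mset (m + n) x = replicate_mset m x + replicate_mset n x"
  by (induction m) auto

lemma size_minus_replicate_mset: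
  "k \<le> count \<mu> x \<Longrightarrow> size (\<mu> - replicate_mset k x) = size \<mu> - k"
  by (simp add: size_Diff_submset count_le_replicate_mset_subset_eq[symmetric])

lemma count_image_mset_mset_set:
  assumes "finite T"
  shows "count (image_mset \<tau> (mset_set T)) x = card {t\<in>T. \<tau> t = x}"
proof -
  have "count (image_mset \<tau> (mset_set T)) x = (\<Sum>y\<in>\<tau> -` {x} \<inter> T. 1)"
    using assms by (simp add: count_image_mset)
  also have "\<tau> -` {x} \<inter> T = {t\<in>T. \<tau> t = x}" by auto
  finally show ?thesis by simp
qed

lemma image_mset_mset_set_Diff_const:
  assumes fT: "finite T" and KT: "K \<subseteq> T" and Kc: "\<And>t. t \<in> K \<Longrightarrow> \<tau> t = x"
  shows "image_mset \<tau> (mset_set (T - K)) = image_mset \<tau> (mset_set T) - replicate_mset (card K) x"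
proof -
  have fK: "finite K" using finite_subset[OF KT fT] .
  have "mset_set K \<subseteq># mset_set T" using KT fT by (rule subset_imp_msubset_mset_set)
  then have "image_mset \<tau> (mset_set (T - K)) = image_mset \<tau> (mset_set T) - image_mset \<tau> (mset_set K)"
    by (simp add: mset_set_Diff[OF fT KT] image_mset_Diff)
  also have "image_mset \<tau> (mset_set K) = image_mset (\<lambda>_. x) (mset_set K)"
    by (rule image_mset_cong) (use Kc fK in auto)
  also have "\<dots> = replicate_mset (card K) x" by (simp add: image_mset_const_eq)
  finally show ?thesis .
qed

lemma image_mset_nth_mset_set: "image_mset (\<lambda>k. ts ! k) (mset_set {..<length ts}) = mset ts"
  by (metis map_nth mset_map mset_set_upto_eq_mset_upto lessThan_atLeast0)

section \<open>Binomial coefficients and numbers of surjections\<close>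

definition falling_fact :: "'b::comm_ring_1 \<Rightarrow> nat \<Rightarrow> 'b" where
  "falling_fact a k = (\<Prod>i<k. a - of_nat i)"

lemma falling_fact_Suc: "falling_fact a (Suc k) = falling_fact a k * (a - of_nat k)"
  by (simp add: falling_fact_def)

lemma fact_mult_cancel:
  fixes c c' :: "'b::binomial_ring"
  assumes "of_nat (fact k) * c = of_nat (fact k) * c'"
  shows "c = c'"
proof -
  have "of_nat (fact k) * (c - c') = 0" using assms by (simp add: algebra_simps)
  then show ?thesis using torsion_free[of "fact k" "c - c'"] by simp
qed

lemma fact_mult_bchoose:
  fixes a :: "'b::binomial_ring"
  shows "of_nat (fact k) * bchoose a k = falling_fact a k"
proof -
  obtain c where c: "of_nat (fact k) * c = (\<Prod>i<k. a - of_nat i)"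
    using binom_closed by blast
  have "bchoose a k = c"
    unfolding bchoose_def by (rule the_equality) (use c fact_mult_cancel in metis)+
  then show ?thesis using c by (simp add: falling_fact_def)
qed

lemma power_eq_sum_Stirling_falling_fact:
  fixes a :: "'b::comm_ring_1"
  shows "a ^ k = (\<Sum>d\<le>k. of_nat (Stirling k d) * falling_fact a d)"
proof (induction k)
  case 0
  then show ?case by (simp add: falling_fact_def)
next
  case (Suc k)
  \<comment> \<open>\<open>a * falling_fact a d = falling_fact a (Suc d) + d * falling_fact a d\<close>\<close>
  have "a ^ Suc k = (\<Sum>d\<le>k. of_nat (Stirling k d) * falling_fact a (Suc d)) +
                   (\<Sum>d\<le>k. of_nat (Stirling k d) * of_nat d * falling_fact a d)"
    using Suc by (simp add: sum_distrib_left sum.distrib[symmetric] falling_fact_Suc algebra_simps)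
  also have "(\<Sum>d\<le>k. of_nat (Stirling k d) * falling_fact a (Suc d)) =
      (\<Sum>d\<le>Suc k. (if d = 0 then 0 else of_nat (Stirling k (d - 1))) * falling_fact a d)"
    by (subst sum.atMost_Suc_shift) simp
  also have "(\<Sum>d\<le>k. of_nat (Stirling k d) * of_nat d * falling_fact a d) =
      (\<Sum>d\<le>Suc k. of_nat (Stirling k d) * of_nat d * falling_fact a d)"
    by (simp add: sum.atMost_Suc)
  also have "(\<Sum>d\<le>Suc k. (if d = 0 then 0 else of_nat (Stirling k (d - 1))) * falling_fact a d) +
      (\<Sum>d\<le>Suc k. of_nat (Stirling k d) * of_nat d * falling_fact a d) =
      (\<Sum>d\<le>Suc k. of_nat (Stirling (Suc k) d) * falling_fact a d)"
    unfolding sum.distrib[symmetric]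
    by (rule sum.cong[OF refl], rename_tac d, case_tac d) (simp_all add: algebra_simps)
  finally show ?case .
qed

definition nsurj :: "nat \<Rightarrow> nat \<Rightarrow> nat" where
  "nsurj k d = fact d * Stirling k d"

text \<open>Both sides count partitions into \<open>d + 1\<close> blocks, one of them distinguished;
  on the right the \<open>j + 1\<close> elements of the distinguished block are chosen first.\<close>
lemma Stirling_Suc_right_eq:
  "Suc d * Stirling k (Suc d) = (\<Sum>j<k. (k choose Suc j) * Stirling (k - Suc j) d)"
proof (induction k arbitrary: d)
  case 0 then show ?case by simp
next
  case (Suc k)
  have split: "(\<Sum>j<Suc k. (Suc k choose Suc j) * Stirling (Suc k - Suc j) d) =
      (\<Sum>j<k. (k choose Suc j) * Stirling (Suc (k - Suc j)) d) +
      (Stirling k d + (\<Sum>j<k. (k choose Suc j) * Stirling (k - Suc j) d))"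
  proof -
    have "(\<Sum>j<Suc k. (Suc k choose Suc j) * Stirling (Suc k - Suc j) d) =
        (\<Sum>j<Suc k. (k choose Suc j) * Stirling (k - j) d) + (\<Sum>j<Suc k. (k choose j) * Stirling (k - j) d)"
      by (simp add: sum.distrib[symmetric] algebra_simps)
    also have "(\<Sum>j<Suc k. (k choose Suc j) * Stirling (k - j) d) =
        (\<Sum>j<k. (k choose Suc j) * Stirling (Suc (k - Suc j)) d)"
      by (simp add: Suc_diff_Suc)
    also have "(\<Sum>j<Suc k. (k choose j) * Stirling (k - j) d) =
        Stirling k d + (\<Sum>j<k. (k choose Suc j) * Stirling (k - Suc j) d)"
      by (subst sum.lessThan_Suc_shift) simp
    finally show ?thesis .
  qed
  show ?case
  proof (cases d)
    case 0
    then show ?thesis using split Suc.IH[of 0] by simp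
  next
    case (Suc d')
    have "(\<Sum>j<k. (k choose Suc j) * Stirling (Suc (k - Suc j)) d) =
       d * (\<Sum>j<k. (k choose Suc j) * Stirling (k - Suc j) d) +
       (\<Sum>j<k. (k choose Suc j) * Stirling (k - Suc j) d')"
      using Suc by (simp add: sum_distrib_left sum.distrib[symmetric] algebra_simps)
    also have "\<dots> = d * (Suc d * Stirling k (Suc d)) + d * Stirling k d"
      using Suc.IH[of d] Suc.IH[of d'] Suc by simp
    finally have A: "(\<Sum>j<k. (k choose Suc j) * Stirling (Suc (k - Suc j)) d) =
       d * (Suc d * Stirling k (Suc d)) + d * Stirling k d" .
    have E: "(\<Sum>j<Suc k. (Suc k choose Suc j) * Stirling (Suc k - Suc j) d) =
       d * (Suc d * Stirling k (Suc d)) + d * Stirling k d + (Stirling k d + Suc d * Stirling k (Suc d))"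
      using split[unfolded A Suc.IH[of d, symmetric]] by simp
    show ?thesis by (simp only: E) (simp add: algebra_simps)
  qed
qed

lemma nsurj_Suc_right: "nsurj k (Suc d) = (\<Sum>j<k. (k choose Suc j) * nsurj (k - Suc j) d)"
proof -
  have "nsurj k (Suc d) = fact d * (Suc d * Stirling k (Suc d))" by (simp add: nsurj_def algebra_simps)
  also have "\<dots> = (\<Sum>j<k. (k choose Suc j) * nsurj (k - Suc j) d)"
    by (simp only: Stirling_Suc_right_eq sum_distrib_left nsurj_def) (simp add: algebra_simps)
  finally show ?thesis .
qed

lemma nsurj_0_right [simp]: "nsurj k 0 = (if k = 0 then 1 else 0)"
  by (cases k) (simp_all add: nsurj_def)

lemma nsurj_eq_0: "k < d \<Longrightarrow> nsurj k d = 0"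
  by (simp add: nsurj_def)

lemma power_eq_sum_bchoose_nsurj:
  fixes a :: "'b::binomial_ring"
  shows "a ^ k = (\<Sum>d\<le>k. bchoose a d * of_nat (nsurj k d))"
  unfolding power_eq_sum_Stirling_falling_fact
  by (rule sum.cong[OF refl]) (simp add: nsurj_def fact_mult_bchoose[symmetric] algebra_simps)

lemma sum_bchoose_nsurj_atLeast1:
  fixes a :: "'b::binomial_ring"
  assumes "k \<le> m"
  shows "(\<Sum>d\<in>{1..m}. bchoose a d * of_nat (nsurj k d)) = (if k = 0 then 0 else a ^ k)"
proof (cases "k = 0")
  case True
  then show ?thesis by (simp add: nsurj_def)
next
  case False
  have "(\<Sum>d\<in>{1..m}. bchoose a d * of_nat (nsurj k d)) = (\<Sum>d\<le>m. bchoose a d * of_nat (nsurj k d))"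
    by (rule sum.mono_neutral_left) (use False in \<open>auto simp: not_less_eq_eq\<close>)
  also have "\<dots> = (\<Sum>d\<le>k. bchoose a d * of_nat (nsurj k d))"
    by (rule sum.mono_neutral_right) (use assms in \<open>auto simp: nsurj_eq_0\<close>)
  finally show ?thesis using False by (simp add: power_eq_sum_bchoose_nsurj)
qed

section \<open>The coefficients of the Ariadne functor\<close>

definition ends :: "('a, 'b) passage \<Rightarrow> 'a \<times> 'a" where
  "ends p = (src p, tgt p)"

lemma multation_of_Nil [simp]: "multation_of [] ds = {#}"
  by (simp add: multation_of_def)

lemma multation_of_Cons [simp]:
  "multation_of (p # ps) (d # ds) = replicate_mset d (ends p) + multation_of ps ds"
  by (simp add: multation_of_def ends_def)

lemma size_multation_of: "length ds = length ps \<Longrightarrow> size (multation_of ps ds) = sum_list ds"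
  by (induction ps arbitrary: ds) (auto simp: length_Suc_conv)

definition mset_fact_prod :: "'a multiset \<Rightarrow> nat" where
  "mset_fact_prod \<mu> = (\<Prod>x\<in>set_mset \<mu>. fact (count \<mu> x))"

lemma mset_fact_prod_superset:
  "finite S \<Longrightarrow> set_mset \<mu> \<subseteq> S \<Longrightarrow> mset_fact_prod \<mu> = (\<Prod>x\<in>S. fact (count \<mu> x))"
  unfolding mset_fact_prod_def by (rule prod.mono_neutral_left) (auto simp: not_in_iff)

lemma mset_fact_prod_replicate_add:
  "mset_fact_prod (replicate_mset d x + \<mu>) = ((count \<mu> x + d) choose d) * fact d * mset_fact_prod \<mu>"
proof -
  define S where "S = insert x (set_mset \<mu>)"
  have S: "finite S" "x \<in> S" by (simp_all add: S_def)
  have rest: "(\<Prod>y\<in>S - {x}. fact (count (replicate_mset d x + \<mu>) y)) = (\<Prod>y\<in>S - {x}. fact (count \<mu> y))"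
    by (rule prod.cong) auto
  have "mset_fact_prod (replicate_mset d x + \<mu>) = (\<Prod>y\<in>S. fact (count (replicate_mset d x + \<mu>) y))"
    by (rule mset_fact_prod_superset) (auto simp: S_def)
  also have "\<dots> = fact (count \<mu> x + d) * (\<Prod>y\<in>S - {x}. fact (count \<mu> y))"
    by (simp add: prod.remove[OF S] add.commute rest)
  finally have "mset_fact_prod (replicate_mset d x + \<mu>) =
      fact (count \<mu> x + d) * (\<Prod>y\<in>S - {x}. fact (count \<mu> y))" .
  moreover have "mset_fact_prod \<mu> = (\<Prod>y\<in>S. fact (count \<mu> y))"
    by (rule mset_fact_prod_superset) (auto simp: S_def)
  then have "mset_fact_prod \<mu> = fact (count \<mu> x) * (\<Prod>y\<in>S - {x}. fact (count \<mu> y))"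
    by (simp add: prod.remove[OF S])
  moreover have "fact (count \<mu> x + d) = ((count \<mu> x + d) choose d) * fact d * fact (count \<mu> x)"
    using binomial_fact_lemma[of d "count \<mu> x + d"] by (simp add: algebra_simps)
  ultimately show ?thesis by simp
qed

lemma prod_fact_dvd_mset_fact_prod:
  "length ds = length ps \<Longrightarrow> (\<Prod>d\<leftarrow>ds. fact d) dvd mset_fact_prod (multation_of ps ds)"
proof (induction ps arbitrary: ds)
  case Nil
  then show ?case by simp
next
  case (Cons p ps)
  then obtain d ds' where "ds = d # ds'" and "length ds' = length ps"
    by (cases ds) auto
  with Cons.IH show ?case
    by (simp add: mset_fact_prod_replicate_add mult_dvd_mono mult.commute mult.left_commute)
qed

lemma dp_coeff_eq: "dp_coeff \<mu> ds = mset_fact_prod \<mu> div (\<Prod>d\<leftarrow>ds. fact d)"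
  by (simp add: dp_coeff_def mset_fact_prod_def)

lemma dp_coeff_Cons:
  assumes "length ds = length ps"
  shows "dp_coeff (replicate_mset d (ends p) + multation_of ps ds) (d # ds) =
     ((count (multation_of ps ds) (ends p) + d) choose d) * dp_coeff (multation_of ps ds) ds"
proof -
  obtain q where q: "mset_fact_prod (multation_of ps ds) = (\<Prod>d\<leftarrow>ds. fact d) * q"
    using prod_fact_dvd_mset_fact_prod[OF assms] by blast
  have "(\<Prod>d\<leftarrow>ds. fact d) > (0::nat)"
    by (induction ds) auto
  then show ?thesis
    by (simp add: dp_coeff_eq mset_fact_prod_replicate_add q mult.commute mult.left_commute)
qed

text \<open>Recursive form of the coefficient of \<open>\<mu>\<close> in the Ariadne image of the
  passages \<open>ps\<close>: the first passage \<open>p\<close> absorbs \<open>k \<ge> 1\<close> of the copies of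
  \<open>ends p\<close> in \<open>\<mu>\<close>, which it can do in \<open>count \<mu> (ends p) choose k\<close> ways.\<close>
fun ariadne_coeff :: "('a, 'b::comm_ring_1) passage list \<Rightarrow> 'a multation \<Rightarrow> 'b" where
  "ariadne_coeff [] \<mu> = (if \<mu> = {#} then 1 else 0)"
| "ariadne_coeff (p # ps) \<mu> = (\<Sum>k\<in>{1..count \<mu> (ends p)}.
      of_nat (count \<mu> (ends p) choose k) * lbl p ^ k *
      ariadne_coeff ps (\<mu> - replicate_mset k (ends p)))"

lemma ariadne_coeff_eq_0_if_size_less:
  "size \<mu> < length ps \<Longrightarrow> ariadne_coeff ps \<mu> = 0"
proof (induction ps arbitrary: \<mu>)
  case Nil
  then show ?case by simp
next
  case (Cons p ps)
  have "ariadne_coeff ps (\<mu> - replicate_mset k (ends p)) = 0"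
    if "k \<in> {1..count \<mu> (ends p)}" for k
    using that Cons.prems count_le_size[of \<mu> "ends p"]
    by (intro Cons.IH) (auto simp: size_minus_replicate_mset)
  then show ?case by simp
qed

lemma finite_assignments: "finite (assignments m ps)"
proof -
  have "assignments m ps \<subseteq> {ds. set ds \<subseteq> {..m} \<and> length ds = length ps}"
    by (auto simp: assignments_def intro: order.trans[OF member_le_sum_list])
  then show ?thesis by (rule finite_subset) (rule finite_lists_length_eq, simp)
qed

lemma assignments_Nil [simp]: "assignments m [] = {[]}"
  by (auto simp: assignments_def)

lemma assignments_Cons:
  "assignments m (p # ps) = (\<lambda>(d, ds). d # ds) ` (SIGMA d:{1..m}. assignments (m - d) ps)"
  by (auto simp: assignments_def length_Suc_conv image_iff)

definition exact_assignments :: "('a, 'b) passage list \<Rightarrow> 'a multation \<Rightarrow> nat list set" where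
  "exact_assignments ps \<mu> =
     {ds. length ds = length ps \<and> (\<forall>d\<in>set ds. 1 \<le> d) \<and> multation_of ps ds = \<mu>}"

lemma finite_exact_assignments: "finite (exact_assignments ps \<mu>)"
proof (rule finite_subset[OF _ finite_assignments])
  show "exact_assignments ps \<mu> \<subseteq> assignments (size \<mu>) ps"
    by (auto simp: exact_assignments_def assignments_def size_multation_of)
qed

lemma exact_assignments_Nil: "exact_assignments [] \<mu> = (if \<mu> = {#} then {[]} else {})"
  by (auto simp: exact_assignments_def)

lemma exact_assignments_Cons:
  "exact_assignments (p # ps) \<mu> = (\<lambda>(d, ds). d # ds) `
     (SIGMA d:{1..count \<mu> (ends p)}. exact_assignments ps (\<mu> - replicate_mset d (ends p)))"
proof safe
  fix ds assume "ds \<in> exact_assignments (p # ps) \<mu>"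
  then obtain d ds' where ds: "ds = d # ds'" "length ds' = length ps" "1 \<le> d" "\<forall>d\<in>set ds'. 1 \<le> d"
    and \<mu>: "replicate_mset d (ends p) + multation_of ps ds' = \<mu>"
    by (cases ds) (auto simp: exact_assignments_def)
  then have "(d, ds') \<in> (SIGMA d:{1..count \<mu> (ends p)}. exact_assignments ps (\<mu> - replicate_mset d (ends p)))"
    by (auto simp: exact_assignments_def)
  then show "ds \<in> (\<lambda>(d, ds). d # ds) `
      (SIGMA d:{1..count \<mu> (ends p)}. exact_assignments ps (\<mu> - replicate_mset d (ends p)))"
    using ds by force
next
  fix d ds assume d: "d \<in> {1..count \<mu> (ends p)}"
    and ds: "ds \<in> exact_assignments ps (\<mu> - replicate_mset d (ends p))"
  have "replicate_mset d (ends p) + (\<mu> - replicate_mset d (ends p)) = \<mu>"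
    using d by (simp add: count_le_replicate_mset_subset_eq subset_mset.add_diff_inverse)
  then show "d # ds \<in> exact_assignments (p # ps) \<mu>"
    using d ds by (auto simp: exact_assignments_def)
qed

lemma sum_exact_assignments_Cons:
  "(\<Sum>ds\<in>exact_assignments (p # ps) \<mu>. f ds) = (\<Sum>d\<in>{1..count \<mu> (ends p)}.
      \<Sum>ds\<in>exact_assignments ps (\<mu> - replicate_mset d (ends p)). f (d # ds))"
  unfolding exact_assignments_Cons by (rule sum_Cons_image_Sigma) (auto simp: finite_exact_assignments)

lemma dp_coeff_exact_assignments_Cons:
  assumes "d \<in> {1..count \<mu> (ends p)}" and "ds \<in> exact_assignments ps (\<mu> - replicate_mset d (ends p))"
  shows "dp_coeff \<mu> (d # ds) =
    (count \<mu> (ends p) choose d) * dp_coeff (\<mu> - replicate_mset d (ends p)) ds"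
proof -
  from assms(2) have len: "length ds = length ps"
    and \<mu>': "multation_of ps ds = \<mu> - replicate_mset d (ends p)"
    by (auto simp: exact_assignments_def)
  have \<mu>: "\<mu> = replicate_mset d (ends p) + multation_of ps ds"
    using assms(1) \<mu>' by (simp add: count_le_replicate_mset_subset_eq subset_mset.add_diff_inverse)
  have count: "count (multation_of ps ds) (ends p) + d = count \<mu> (ends p)"
    using assms(1) \<mu>' by simp
  show ?thesis
    using dp_coeff_Cons[OF len, of d p, unfolded count, folded \<mu>, unfolded \<mu>'] .
qed

lemma sum_exact_assignments_eq_ariadne_coeff:
  fixes ps :: "('a, 'b::comm_ring_1) passage list"
  shows "(\<Sum>ds\<in>exact_assignments ps \<mu>. (\<Prod>(p, d)\<leftarrow>zip ps ds. lbl p ^ d) * of_nat (dp_coeff \<mu> ds)) =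
    ariadne_coeff ps \<mu>"
proof (induction ps arbitrary: \<mu>)
  case Nil
  then show ?case by (simp add: exact_assignments_Nil dp_coeff_def)
next
  case (Cons p ps)
  have "(\<Sum>ds\<in>exact_assignments ps (\<mu> - replicate_mset d (ends p)).
        lbl p ^ d * (\<Prod>(p, d)\<leftarrow>zip ps ds. lbl p ^ d) * of_nat (dp_coeff \<mu> (d # ds))) =
      of_nat (count \<mu> (ends p) choose d) * lbl p ^ d *
        ariadne_coeff ps (\<mu> - replicate_mset d (ends p))"
    if d: "d \<in> {1..count \<mu> (ends p)}" for d
    by (simp add: Cons.IH[symmetric] sum_distrib_left dp_coeff_exact_assignments_Cons[OF d]
        mult_ac cong: sum.cong)
  then show ?case
    by (simp only: sum_exact_assignments_Cons ariadne_coeff.simps)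
      (intro sum.cong refl, simp add: mult.assoc)
qed

lemma ariadne_eq_ariadne_coeff:
  "ariadne n P \<mu> = (if size \<mu> = n then ariadne_coeff (maze_list P) \<mu> else 0)"
proof -
  have "{ds \<in> assignments n (maze_list P). sum_list ds = n \<and> multation_of (maze_list P) ds = \<mu>} =
      (if size \<mu> = n then exact_assignments (maze_list P) \<mu> else {})"
    by (auto simp: exact_assignments_def assignments_def size_multation_of)
  then show ?thesis
    by (simp add: ariadne_def sum_exact_assignments_eq_ariadne_coeff)
qed

section \<open>Expanding labels into unit passages\<close>

definition unit_passage :: "('a, 'b) passage \<Rightarrow> ('a, 'b::one) passage" where
  "unit_passage p = (src p, 1, tgt p)"

lemma ends_unit_passage [simp]: "ends (unit_passage p) = ends p"
  and lbl_unit_passage [simp]: "lbl (unit_passage p) = 1"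
  by (simp_all add: ends_def unit_passage_def src_def tgt_def lbl_def)

text \<open>\<open>d\<close> unit copies of a passage absorb \<open>k\<close> copies of its endpoint pair
  in exactly \<open>nsurj k d\<close> ways.\<close>
lemma ariadne_coeff_replicate_unit:
  fixes u :: "('a, 'b::comm_ring_1) passage"
  assumes "lbl u = 1"
  shows "ariadne_coeff (replicate d u @ rest) \<mu> =
    (\<Sum>k\<le>count \<mu> (ends u). of_nat ((count \<mu> (ends u) choose k) * nsurj k d) *
        ariadne_coeff rest (\<mu> - replicate_mset k (ends u)))"
proof (induction d arbitrary: \<mu>)
  case 0
  have "(\<Sum>k\<le>count \<mu> (ends u). of_nat ((count \<mu> (ends u) choose k) * nsurj k 0) *
        ariadne_coeff rest (\<mu> - replicate_mset k (ends u))) =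
      (\<Sum>k\<le>count \<mu> (ends u). if k = 0 then ariadne_coeff rest \<mu> else 0)"
    by (rule sum.cong) auto
  then show ?case by simp
next
  case (Suc d)
  define x where "x = ends u"
  define c where "c = count \<mu> x"
  define F where "F k = ariadne_coeff rest (\<mu> - replicate_mset k x)" for k
  have "ariadne_coeff (replicate (Suc d) u @ rest) \<mu> =
     (\<Sum>j\<in>{1..c}. of_nat (c choose j) * ariadne_coeff (replicate d u @ rest) (\<mu> - replicate_mset j x))"
    by (simp add: assms x_def c_def)
  also have "\<dots> = (\<Sum>j\<in>{1..c}. \<Sum>i\<le>c - j.
      of_nat ((c choose j) * ((c - j) choose ((i + j) - j)) * nsurj ((i + j) - j) d) * F (i + j))"
    by (simp add: Suc.IH x_def[symmetric] c_def[symmetric] F_def sum_distrib_left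
        replicate_mset_add add.commute mult_ac)
  also have "\<dots> = (\<Sum>k\<le>c. \<Sum>j\<in>{1..k}.
      of_nat ((c choose j) * ((c - j) choose (k - j)) * nsurj (k - j) d) * F k)"
    by (rule sum_atLeast1_triangle)
  also have "\<dots> = (\<Sum>k\<le>c. of_nat ((c choose k) * nsurj k (Suc d)) * F k)"
  proof (rule sum.cong[OF refl])
    fix k assume k: "k \<in> {..c}"
    have "(c choose j) * ((c - j) choose (k - j)) = (c choose k) * (k choose j)"
      if "j \<in> {1..k}" for j
      using choose_mult[of j k c] that k by simp
    then have "(\<Sum>j\<in>{1..k}. of_nat ((c choose j) * ((c - j) choose (k - j)) * nsurj (k - j) d) * F k) =
        (\<Sum>j\<in>{1..k}. of_nat ((c choose k) * ((k choose j) * nsurj (k - j) d)) * F k)"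
      by (simp add: mult.assoc)
    also have "\<dots> = of_nat ((c choose k) * (\<Sum>j<k. (k choose Suc j) * nsurj (k - Suc j) d)) * F k"
      by (simp add: sum_distrib_left sum_distrib_right sum.atLeast1_atMost_eq)
    finally show "(\<Sum>j\<in>{1..k}. of_nat ((c choose j) * ((c - j) choose (k - j)) * nsurj (k - j) d) * F k) =
        of_nat ((c choose k) * nsurj k (Suc d)) * F k"
      by (simp only: nsurj_Suc_right)
  qed
  finally show ?case by (simp add: x_def c_def F_def)
qed

definition unit_passages :: "('a, 'b) passage list \<Rightarrow> nat list \<Rightarrow> ('a, 'b::one) passage list" where
  "unit_passages ps ds = concat (map2 (\<lambda>p d. replicate d (unit_passage p)) ps ds)"

lemma unit_passages_Nil [simp]: "unit_passages [] ds = []"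
  by (simp add: unit_passages_def)

lemma unit_passages_Cons [simp]:
  "unit_passages (p # ps) (d # ds) = replicate d (unit_passage p) @ unit_passages ps ds"
  by (simp add: unit_passages_def)

lemma unit_maze_eq_mset_unit_passages: "unit_maze ps ds = mset (unit_passages ps ds)"
  by (simp add: unit_maze_def unit_passages_def unit_passage_def)

lemma sum_assignments_Cons:
  "(\<Sum>ds\<in>assignments m (p # ps). f ds) = (\<Sum>d\<in>{1..m}. \<Sum>ds\<in>assignments (m - d) ps. f (d # ds))"
  unfolding assignments_Cons by (rule sum_Cons_image_Sigma) (auto simp: finite_assignments)

text \<open>The algebraic heart of relation (IV): expanding each passage label \<open>a\<close>
  as \<open>\<Sum>\<^sub>d (a choose d)\<close> parallel unit passages is compatible with the coefficients,
  because \<open>a ^ k = \<Sum>\<^sub>d (a choose d) * nsurj k d\<close>. Assignments with total above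
  \<open>size \<mu>\<close> contribute nothing, so truncating them at \<open>m\<close> is harmless.\<close>
lemma ariadne_coeff_unit_expansion:
  fixes ps :: "('a, 'b::binomial_ring) passage list"
  assumes "size \<mu> \<le> m"
  shows "ariadne_coeff ps \<mu> = (\<Sum>ds\<in>assignments m ps.
      (\<Prod>(p, d)\<leftarrow>zip ps ds. bchoose (lbl p) d) * ariadne_coeff (unit_passages ps ds) \<mu>)"
  using assms
proof (induction ps arbitrary: \<mu> m)
  case Nil
  then show ?case by simp
next
  case (Cons p ps)
  define x where "x = ends p"
  define c where "c = count \<mu> x"
  define a where "a = lbl p"
  define B where "B ds = (\<Prod>(p, d)\<leftarrow>zip ps ds. bchoose (lbl p) d)" for ds
  define R where "R k = ariadne_coeff ps (\<mu> - replicate_mset k x)" for k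
  have c_le: "c \<le> m" using Cons.prems count_le_size[of \<mu> x] by (simp add: c_def)
  have IH: "(\<Sum>ds\<in>assignments (m - d) ps. B ds * ariadne_coeff (unit_passages ps ds)
      (\<mu> - replicate_mset k x)) = R k" if "k \<le> c" "d \<le> k" for d k
    using Cons.IH[of "\<mu> - replicate_mset k x" "m - d"] that Cons.prems
    by (simp add: size_minus_replicate_mset c_def B_def R_def)
  have "(\<Sum>ds\<in>assignments m (p # ps). (\<Prod>(p, d)\<leftarrow>zip (p # ps) ds. bchoose (lbl p) d) *
         ariadne_coeff (unit_passages (p # ps) ds) \<mu>)
     = (\<Sum>d\<in>{1..m}. \<Sum>ds\<in>assignments (m - d) ps. bchoose a d * B ds *
         (\<Sum>k\<le>c. of_nat ((c choose k) * nsurj k d) * ariadne_coeff (unit_passages ps ds) (\<mu> - replicate_mset k x)))"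
    by (simp add: sum_assignments_Cons ariadne_coeff_replicate_unit B_def a_def x_def c_def mult.assoc)
  also have "\<dots> = (\<Sum>d\<in>{1..m}. \<Sum>k\<le>c. bchoose a d * of_nat ((c choose k) * nsurj k d) *
         (\<Sum>ds\<in>assignments (m - d) ps. B ds * ariadne_coeff (unit_passages ps ds) (\<mu> - replicate_mset k x)))"
    by (simp add: sum_distrib_left sum_distrib_right mult_ac sum.swap[of _ "{..c}"])
  also have "\<dots> = (\<Sum>d\<in>{1..m}. \<Sum>k\<le>c. bchoose a d * of_nat ((c choose k) * nsurj k d) * R k)"
  proof (intro sum.cong refl)
    fix d k assume "k \<in> {..c}"
    then show "bchoose a d * of_nat ((c choose k) * nsurj k d) *
        (\<Sum>ds\<in>assignments (m - d) ps. B ds * ariadne_coeff (unit_passages ps ds) (\<mu> - replicate_mset k x)) =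
        bchoose a d * of_nat ((c choose k) * nsurj k d) * R k"
      by (cases "d \<le> k") (simp_all add: IH nsurj_eq_0)
  qed
  also have "\<dots> = (\<Sum>k\<le>c. of_nat (c choose k) * R k * (\<Sum>d\<in>{1..m}. bchoose a d * of_nat (nsurj k d)))"
    by (subst sum.swap) (simp add: sum_distrib_left sum_distrib_right mult_ac)
  also have "\<dots> = (\<Sum>k\<le>c. of_nat (c choose k) * R k * (if k = 0 then 0 else a ^ k))"
    using c_le by (intro sum.cong refl) (subst sum_bchoose_nsurj_atLeast1, auto)
  also have "\<dots> = (\<Sum>k\<in>{1..c}. of_nat (c choose k) * a ^ k * R k)"
    by (rule sum.mono_neutral_cong_right) auto
  finally show ?case by (simp add: x_def c_def a_def R_def)
qed

section \<open>Covers\<close>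

text \<open>Combinatorial reading of the coefficients: \<open>T\<close> with \<open>\<tau>\<close> enumerates a
  multation, \<open>\<pi>\<close> enumerates the passage occurrences of a maze by \<open>I\<close>, and a cover
  sends every element of \<open>T\<close> to an occurrence with the same endpoints, using
  every occurrence.\<close>
definition covers ::
  "'i set \<Rightarrow> ('i \<Rightarrow> ('a, 'b) passage) \<Rightarrow> 't set \<Rightarrow> ('t \<Rightarrow> 'a \<times> 'a) \<Rightarrow> ('t \<Rightarrow> 'i) set" where
  "covers I \<pi> T \<tau> = {g \<in> T \<rightarrow>\<^sub>E I. g ` T = I \<and> (\<forall>t\<in>T. ends (\<pi> (g t)) = \<tau> t)}"

definition cover_weight ::
  "'i set \<Rightarrow> ('i \<Rightarrow> ('a, 'b::comm_ring_1) passage) \<Rightarrow> 't set \<Rightarrow> ('t \<Rightarrow> 'a \<times> 'a) \<Rightarrow> 'b" where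
  "cover_weight I \<pi> T \<tau> = (\<Sum>g\<in>covers I \<pi> T \<tau>. \<Prod>t\<in>T. lbl (\<pi> (g t)))"

lemma mem_covers:
  "g \<in> covers I \<pi> T \<tau> \<longleftrightarrow>
    (\<forall>t\<in>T. g t \<in> I \<and> ends (\<pi> (g t)) = \<tau> t) \<and> (\<forall>t. t \<notin> T \<longrightarrow> g t = undefined) \<and> g ` T = I"
  by (auto simp: covers_def PiE_iff extensional_def)

lemma finite_covers: "finite I \<Longrightarrow> finite T \<Longrightarrow> finite (covers I \<pi> T \<tau>)"
  unfolding covers_def by (rule finite_subset[OF _ finite_PiE[of T "\<lambda>_. I"]]) auto

lemma cover_weight_cong:
  "(\<And>i. i \<in> I \<Longrightarrow> \<pi> i = \<pi>' i) \<Longrightarrow> cover_weight I \<pi> T \<tau> = cover_weight I \<pi>' T \<tau>"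
proof -
  assume eq: "\<And>i. i \<in> I \<Longrightarrow> \<pi> i = \<pi>' i"
  then have "covers I \<pi> T \<tau> = covers I \<pi>' T \<tau>"
    by (auto simp: covers_def PiE_iff)
  with eq show ?thesis
    unfolding cover_weight_def by (intro sum.cong prod.cong refl) (auto simp: mem_covers)
qed

lemma cover_weight_reindex:
  assumes "bij_betw \<beta> J I"
  shows "cover_weight J (\<pi> \<circ> \<beta>) T \<tau> = cover_weight I \<pi> T \<tau>"
  unfolding cover_weight_def
proof (rule sum.reindex_bij_witness[of _ "\<lambda>g. restrict (inv_into J \<beta> \<circ> g) T" "\<lambda>g. restrict (\<beta> \<circ> g) T"])
  have inj: "inj_on \<beta> J" and im: "\<beta> ` J = I"
    using assms by (auto simp: bij_betw_def)
  fix g assume g: "g \<in> covers J (\<pi> \<circ> \<beta>) T \<tau>"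
  then have gT: "\<And>t. t \<in> T \<Longrightarrow> g t \<in> J" and gE: "\<And>t. t \<notin> T \<Longrightarrow> g t = undefined"
    by (simp_all add: mem_covers)
  show "restrict (inv_into J \<beta> \<circ> restrict (\<beta> \<circ> g) T) T = g"
    by (rule ext) (auto simp: gE gT inv_into_f_f[OF inj])
  have "restrict (\<beta> \<circ> g) T ` T = \<beta> ` g ` T"
    by (auto simp: image_iff)
  then show "restrict (\<beta> \<circ> g) T \<in> covers I \<pi> T \<tau>"
    using g im by (auto simp: mem_covers)
  show "(\<Prod>t\<in>T. lbl (\<pi> (restrict (\<beta> \<circ> g) T t))) = (\<Prod>t\<in>T. lbl ((\<pi> \<circ> \<beta>) (g t)))"
    by (rule prod.cong) auto
next
  have im: "\<beta> ` J = I"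
    using assms by (simp add: bij_betw_def)
  have im': "inv_into J \<beta> ` I = J"
    using assms by (simp add: bij_betw_inv_into bij_betw_imp_surj_on)
  fix g assume g: "g \<in> covers I \<pi> T \<tau>"
  then have gT: "\<And>t. t \<in> T \<Longrightarrow> g t \<in> I" and gE: "\<And>t. t \<notin> T \<Longrightarrow> g t = undefined"
    by (simp_all add: mem_covers)
  have fi: "\<And>t. t \<in> T \<Longrightarrow> \<beta> (inv_into J \<beta> (g t)) = g t"
    using gT im by (auto intro: f_inv_into_f)
  show "restrict (\<beta> \<circ> restrict (inv_into J \<beta> \<circ> g) T) T = g"
    by (rule ext) (auto simp: gE fi)
  have "restrict (inv_into J \<beta> \<circ> g) T ` T = inv_into J \<beta> ` g ` T"
    by (auto simp: image_iff)
  then show "restrict (inv_into J \<beta> \<circ> g) T \<in> covers J (\<pi> \<circ> \<beta>) T \<tau>"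
    using g fi im' by (auto simp: mem_covers intro: inv_into_into)
qed

text \<open>A cover of \<open>insert i I\<close> is the same as its nonempty fibre \<open>K\<close> over \<open>i\<close>
  together with a cover of \<open>I\<close> by \<open>T - K\<close>.\<close>
definition split_fibre :: "'t set \<Rightarrow> 'i \<Rightarrow> ('t \<Rightarrow> 'i) \<Rightarrow> 't set \<times> ('t \<Rightarrow> 'i)" where
  "split_fibre T i f = ({t\<in>T. f t = i}, restrict f (T - {t\<in>T. f t = i}))"

definition merge_fibre :: "'t set \<Rightarrow> 'i \<Rightarrow> 't set \<times> ('t \<Rightarrow> 'i) \<Rightarrow> 't \<Rightarrow> 'i" where
  "merge_fibre T i = (\<lambda>(K, g) t. if t \<in> T then if t \<in> K then i else g t else undefined)"

lemma merge_fibre_apply: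
  "merge_fibre T i (K, g) t = (if t \<in> T then if t \<in> K then i else g t else undefined)"
  by (simp add: merge_fibre_def)

lemma merge_split_fibre: "f \<in> extensional T \<Longrightarrow> merge_fibre T i (split_fibre T i f) = f"
  by (auto simp: merge_fibre_def split_fibre_def extensional_def intro!: ext)

lemma split_merge_fibre:
  assumes "i \<notin> I" and "K \<subseteq> T" and "g \<in> covers I \<pi> (T - K) \<tau>"
  shows "split_fibre T i (merge_fibre T i (K, g)) = (K, g)"
proof -
  have "{t\<in>T. merge_fibre T i (K, g) t = i} = K"
    using assms by (auto simp: merge_fibre_apply mem_covers)
  then show ?thesis
    using assms(3) by (auto simp: split_fibre_def merge_fibre_apply mem_covers intro!: ext)
qed

lemma merge_fibre_in_covers:
  assumes "K \<subseteq> T" and "K \<noteq> {}" and "\<forall>t\<in>K. \<tau> t = ends (\<pi> i)" and "g \<in> covers I \<pi> (T - K) \<tau>"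
  shows "merge_fibre T i (K, g) \<in> covers (insert i I) \<pi> T \<tau>"
proof -
  have "merge_fibre T i (K, g) ` T = merge_fibre T i (K, g) ` K \<union> merge_fibre T i (K, g) ` (T - K)"
    using assms(1) by blast
  also have "\<dots> = insert i I"
    using assms by (auto simp: merge_fibre_apply mem_covers)
  finally show ?thesis
    using assms by (auto simp: mem_covers merge_fibre_apply)
qed

lemma split_fibre_in_covers:
  assumes "i \<notin> I" and "f \<in> covers (insert i I) \<pi> T \<tau>"
  shows "split_fibre T i f \<in>
    (SIGMA K:{K. K \<subseteq> T \<and> K \<noteq> {} \<and> (\<forall>t\<in>K. \<tau> t = ends (\<pi> i))}. covers I \<pi> (T - K) \<tau>)"
proof -
  from assms(2) have fT: "\<And>t. t \<in> T \<Longrightarrow> f t \<in> insert i I \<and> ends (\<pi> (f t)) = \<tau> t"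
    and fim: "f ` T = insert i I"
    by (simp_all add: mem_covers)
  define K where "K = {t\<in>T. f t = i}"
  have "K \<subseteq> T \<and> K \<noteq> {} \<and> (\<forall>t\<in>K. \<tau> t = ends (\<pi> i))"
    using fT fim by (auto simp: K_def) (metis image_iff insertI1)
  moreover have "restrict f (T - K) ` (T - K) = I"
    using fT fim assms(1) by (auto simp: K_def image_iff)
  then have "restrict f (T - K) \<in> covers I \<pi> (T - K) \<tau>"
    using fT by (auto simp: mem_covers K_def)
  ultimately show ?thesis
    by (simp add: split_fibre_def K_def)
qed

lemma prod_merge_fibre:
  assumes "finite T" and "K \<subseteq> T"
  shows "(\<Prod>t\<in>T. lbl (\<pi> (merge_fibre T i (K, g) t))) = lbl (\<pi> i) ^ card K * (\<Prod>t\<in>T - K. lbl (\<pi> (g t)))"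
proof -
  have "(\<Prod>t\<in>T. lbl (\<pi> (merge_fibre T i (K, g) t))) =
      (\<Prod>t\<in>K. lbl (\<pi> (merge_fibre T i (K, g) t))) * (\<Prod>t\<in>T - K. lbl (\<pi> (merge_fibre T i (K, g) t)))"
    using prod.subset_diff[OF assms(2,1)] by (simp add: mult.commute)
  also have "\<dots> = (\<Prod>t\<in>K. lbl (\<pi> i)) * (\<Prod>t\<in>T - K. lbl (\<pi> (g t)))"
    using assms(2) by (intro arg_cong2[where f = "(*)"] prod.cong) (auto simp: merge_fibre_apply)
  finally show ?thesis
    by simp
qed

lemma cover_weight_insert:
  fixes \<pi> :: "'i \<Rightarrow> ('a, 'b::comm_ring_1) passage" and T :: "'t set"
  assumes fI: "finite I" and fT: "finite T" and i: "i \<notin> I"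
  shows "cover_weight (insert i I) \<pi> T \<tau> =
    (\<Sum>K\<in>{K. K \<subseteq> T \<and> K \<noteq> {} \<and> (\<forall>t\<in>K. \<tau> t = ends (\<pi> i))}.
       lbl (\<pi> i) ^ card K * cover_weight I \<pi> (T - K) \<tau>)"
proof -
  define Ks where "Ks = {K. K \<subseteq> T \<and> K \<noteq> {} \<and> (\<forall>t\<in>K. \<tau> t = ends (\<pi> i))}"
  have fKs: "finite Ks"
    unfolding Ks_def by (rule finite_subset[of _ "Pow T"]) (use fT in auto)
  have "(\<Sum>K\<in>Ks. lbl (\<pi> i) ^ card K * cover_weight I \<pi> (T - K) \<tau>) =
      (\<Sum>(K, g)\<in>(SIGMA K:Ks. covers I \<pi> (T - K) \<tau>). lbl (\<pi> i) ^ card K * (\<Prod>t\<in>T - K. lbl (\<pi> (g t))))"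
    unfolding cover_weight_def sum_distrib_left
    by (rule sum.Sigma) (use fKs fI fT in \<open>auto intro: finite_covers\<close>)
  also have "\<dots> = (\<Sum>f\<in>covers (insert i I) \<pi> T \<tau>. \<Prod>t\<in>T. lbl (\<pi> (f t)))"
  proof (rule sum.reindex_bij_witness[of _ "split_fibre T i" "merge_fibre T i"])
    fix Kg assume "Kg \<in> (SIGMA K:Ks. covers I \<pi> (T - K) \<tau>)"
    then obtain K g where Kg: "Kg = (K, g)" and K: "K \<subseteq> T" "K \<noteq> {}" "\<forall>t\<in>K. \<tau> t = ends (\<pi> i)"
      and g: "g \<in> covers I \<pi> (T - K) \<tau>"
      by (auto simp: Ks_def)
    show "split_fibre T i (merge_fibre T i Kg) = Kg"
      unfolding Kg using i K(1) g by (rule split_merge_fibre)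
    show "merge_fibre T i Kg \<in> covers (insert i I) \<pi> T \<tau>"
      unfolding Kg using K g by (rule merge_fibre_in_covers)
    show "(\<Prod>t\<in>T. lbl (\<pi> (merge_fibre T i Kg t))) =
        (case Kg of (K, g) \<Rightarrow> lbl (\<pi> i) ^ card K * (\<Prod>t\<in>T - K. lbl (\<pi> (g t))))"
      unfolding Kg using fT K(1) by (simp add: prod_merge_fibre)
  next
    fix f assume f: "f \<in> covers (insert i I) \<pi> T \<tau>"
    then show "merge_fibre T i (split_fibre T i f) = f"
      by (simp add: merge_split_fibre covers_def PiE_iff)
    show "split_fibre T i f \<in> (SIGMA K:Ks. covers I \<pi> (T - K) \<tau>)"
      unfolding Ks_def using i f by (rule split_fibre_in_covers)
  qed
  finally show ?thesis
    by (simp add: Ks_def cover_weight_def)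
qed

lemma cover_weight_empty: "finite T \<Longrightarrow> cover_weight {} \<pi> T \<tau> = (if T = {} then 1 else 0)"
proof -
  assume fT: "finite T"
  have "covers {} \<pi> T \<tau> = (if T = {} then {\<lambda>_. undefined} else {})"
    by (auto simp: covers_def PiE_iff extensional_def)
  then show ?thesis by (simp add: cover_weight_def)
qed

lemma cover_weight_Cons:
  fixes ps :: "('a, 'b::comm_ring_1) passage list"
  assumes "finite T"
  shows "cover_weight {..<length (p # ps)} (\<lambda>k. (p # ps) ! k) T \<tau> =
    (\<Sum>K\<in>{K. K \<subseteq> T \<and> K \<noteq> {} \<and> (\<forall>t\<in>K. \<tau> t = ends p)}.
       lbl p ^ card K * cover_weight {..<length ps} (\<lambda>k. ps ! k) (T - K) \<tau>)"
proof -
  have bij: "bij_betw Suc {..<length ps} (Suc ` {..<length ps})"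
    by (simp add: bij_betw_def)
  have "cover_weight (Suc ` {..<length ps}) (\<lambda>k. (p # ps) ! k) T' \<tau> = cover_weight {..<length ps} (\<lambda>k. ps ! k) T' \<tau>"
    for T'
    using cover_weight_reindex[OF bij, of "\<lambda>k. (p # ps) ! k" T' \<tau>] by (simp add: comp_def)
  then show ?thesis
    using assms by (simp add: lessThan_Suc_eq_insert_0 cover_weight_insert)
qed

lemma cover_weight_eq_ariadne_coeff:
  fixes ps :: "('a, 'b::comm_ring_1) passage list"
  assumes "finite T"
  shows "cover_weight {..<length ps} (\<lambda>k. ps ! k) T \<tau> = ariadne_coeff ps (image_mset \<tau> (mset_set T))"
  using assms
proof (induction ps arbitrary: T)
  case Nil
  then show ?case by (simp add: cover_weight_empty mset_set_empty_iff)
next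
  case (Cons p ps)
  define Tp where "Tp = {t\<in>T. \<tau> t = ends p}"
  define \<mu> where "\<mu> = image_mset \<tau> (mset_set T)"
  have fTp: "finite Tp"
    using Cons.prems by (simp add: Tp_def)
  have "cover_weight {..<length (p # ps)} (\<lambda>k. (p # ps) ! k) T \<tau> =
      (\<Sum>K\<in>{K. K \<subseteq> Tp \<and> K \<noteq> {}}. lbl p ^ card K * ariadne_coeff ps (\<mu> - replicate_mset (card K) (ends p)))"
    unfolding cover_weight_Cons[OF Cons.prems]
  proof (rule sum.cong)
    fix K assume "K \<in> {K. K \<subseteq> Tp \<and> K \<noteq> {}}"
    then have "image_mset \<tau> (mset_set (T - K)) = \<mu> - replicate_mset (card K) (ends p)"
      unfolding \<mu>_def by (intro image_mset_mset_set_Diff_const) (use Cons.prems in \<open>auto simp: Tp_def\<close>)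
    then show "lbl p ^ card K * cover_weight {..<length ps} (\<lambda>k. ps ! k) (T - K) \<tau> =
        lbl p ^ card K * ariadne_coeff ps (\<mu> - replicate_mset (card K) (ends p))"
      using Cons.IH Cons.prems by simp
  qed (auto simp: Tp_def)
  also have "\<dots> = (\<Sum>k\<in>{1..card Tp}. of_nat (card Tp choose k) *
      (lbl p ^ k * ariadne_coeff ps (\<mu> - replicate_mset k (ends p))))"
    by (rule sum_nonempty_subsets_card[OF fTp])
  also have "card Tp = count \<mu> (ends p)"
    unfolding \<mu>_def Tp_def by (rule count_image_mset_mset_set[OF Cons.prems, symmetric])
  finally show ?case
    by (simp add: \<mu>_def mult.assoc)
qed

lemma cover_weight_mset_eq:
  assumes fI: "finite I" and ms: "mset ps = image_mset \<pi> (mset_set I)"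
  shows "cover_weight {..<length ps} (\<lambda>k. ps ! k) T \<tau> = cover_weight I \<pi> T \<tau>"
proof -
  have "card I = size (mset ps)" using ms fI by simp
  then have cI: "card I = length ps" by simp
  obtain h where h: "bij_betw h {0..<card I} I" using ex_bij_betw_nat_finite[OF fI] by blast
  then have h': "bij_betw h {..<length ps} I" using cI by (simp add: atLeast0LessThan)
  have "image_mset (\<lambda>k. ps ! k) (mset_set {..<length ps}) = mset ps"
    by (rule image_mset_nth_mset_set)
  also have "\<dots> = image_mset \<pi> (mset_set (h ` {..<length ps}))" using h' ms by (simp add: bij_betw_def)
  also have "\<dots> = image_mset (\<pi> \<circ> h) (mset_set {..<length ps})"
  proof -
    have "inj_on h {..<length ps}" using h' by (simp add: bij_betw_def)
    then have "mset_set (h ` {..<length ps}) = image_mset h (mset_set {..<length ps})"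
      by (simp add: image_mset_mset_set)
    then show ?thesis by (simp add: image_mset.compositionality)
  qed
  finally obtain p where p: "p permutes {..<length ps}" and pe: "\<forall>k\<in>{..<length ps}. ps ! k = (\<pi> \<circ> h) (p k)"
    using image_mset_eq_implies_permutes[of "{..<length ps}" "\<lambda>k. ps ! k" "\<pi> \<circ> h"] by auto
  have bij: "bij_betw (h \<circ> p) {..<length ps} I"
    using bij_betw_trans[OF permutes_imp_bij[OF p] h'] .
  have "cover_weight I \<pi> T \<tau> = cover_weight {..<length ps} (\<pi> \<circ> (h \<circ> p)) T \<tau>" by (rule cover_weight_reindex[OF bij, symmetric])
  also have "\<dots> = cover_weight {..<length ps} (\<lambda>k. ps ! k) T \<tau>" by (rule cover_weight_cong) (use pe in auto)
  finally show ?thesis by simp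
qed

lemma ariadne_coeff_mset_eq:
  assumes "mset ps = mset ps'"
  shows "ariadne_coeff ps \<mu> = ariadne_coeff ps' \<mu>"
proof -
  obtain ts where ts: "mset ts = \<mu>"
    using ex_mset by blast
  then have \<mu>: "\<mu> = image_mset (\<lambda>k. ts ! k) (mset_set {..<length ts})"
    by (simp add: image_mset_nth_mset_set)
  have "cover_weight {..<length ps} (\<lambda>k. ps ! k) {..<length ts} (\<lambda>k. ts ! k) =
      cover_weight {..<length ps'} (\<lambda>k. ps' ! k) {..<length ts} (\<lambda>k. ts ! k)"
    by (rule cover_weight_mset_eq) (simp_all add: assms image_mset_nth_mset_set)
  then show ?thesis
    unfolding \<mu> by (simp add: cover_weight_eq_ariadne_coeff)
qed

section \<open>Compatibility with composition\<close>

definition comp_passage ::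
  "('a, 'b::times) passage list \<Rightarrow> ('a, 'b) passage list \<Rightarrow> nat \<times> nat \<Rightarrow> ('a, 'b) passage" where
  "comp_passage ps qs = (\<lambda>(i, j). (src (qs ! j), lbl (ps ! i) * lbl (qs ! j), tgt (ps ! i)))"

lemma ends_comp_passage [simp]: "ends (comp_passage ps qs ij) = (src (qs ! snd ij), tgt (ps ! fst ij))"
  and lbl_comp_passage [simp]: "lbl (comp_passage ps qs ij) = lbl (ps ! fst ij) * lbl (qs ! snd ij)"
  by (simp_all add: comp_passage_def ends_def src_def tgt_def lbl_def case_prod_unfold)

lemma comp_result_eq: "comp_result ps qs U = image_mset (comp_passage ps qs) (mset_set U)"
  by (simp add: comp_result_def comp_passage_def)

lemma finite_comp_index_sets: "finite (comp_index_sets ps qs)"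
  unfolding comp_index_sets_def
  by (rule finite_subset[of _ "Pow ({..<length ps} \<times> {..<length qs})"]) auto

lemma finite_comp_index_set: "U \<in> comp_index_sets ps qs \<Longrightarrow> finite U"
  unfolding comp_index_sets_def
  by (auto intro: finite_subset[of _ "{..<length ps} \<times> {..<length qs}"])

text \<open>The combinatorial core of functoriality: a cover of the passages of a
  composite maze amounts to a choice of intermediate points \<open>\<sigma>\<close> together
  with covers of both factors; \<open>\<sigma> t\<close> is the point where the two passages
  combined in \<open>f t\<close> meet.\<close>
definition comp_cover_split ::
  "'t set \<Rightarrow> ('a, 'b) passage list \<Rightarrow> (nat \<times> nat) set \<times> ('t \<Rightarrow> nat \<times> nat) \<Rightarrow>
    ('t \<Rightarrow> 'a) \<times> ('t \<Rightarrow> nat) \<times> ('t \<Rightarrow> nat)" where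
  "comp_cover_split T ps =
    (\<lambda>(U, f). (\<lambda>t\<in>T. src (ps ! fst (f t)), \<lambda>t\<in>T. fst (f t), \<lambda>t\<in>T. snd (f t)))"

definition comp_cover_join ::
  "'t set \<Rightarrow> ('t \<Rightarrow> 'a) \<times> ('t \<Rightarrow> nat) \<times> ('t \<Rightarrow> nat) \<Rightarrow> (nat \<times> nat) set \<times> ('t \<Rightarrow> nat \<times> nat)" where
  "comp_cover_join T = (\<lambda>(\<sigma>, g, h). ((\<lambda>t\<in>T. (g t, h t)) ` T, \<lambda>t\<in>T. (g t, h t)))"

abbreviation factor_covers ::
  "('a, 'b) passage list \<Rightarrow> ('a, 'b) passage list \<Rightarrow> 't set \<Rightarrow> ('t \<Rightarrow> 'a \<times> 'a) \<Rightarrow> ('t \<Rightarrow> 'a) \<Rightarrow>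
    (('t \<Rightarrow> nat) \<times> ('t \<Rightarrow> nat)) set" where
  "factor_covers ps qs T \<tau> \<sigma> \<equiv>
    covers {..<length ps} (\<lambda>i. ps ! i) T (\<lambda>t. (\<sigma> t, snd (\<tau> t))) \<times>
    covers {..<length qs} (\<lambda>j. qs ! j) T (\<lambda>t. (fst (\<tau> t), \<sigma> t))"

lemma comp_cover_split_in_factor_covers:
  assumes U: "U \<in> comp_index_sets ps qs" and f: "f \<in> covers U (comp_passage ps qs) T \<tau>"
    and D: "\<And>i. i < length ps \<Longrightarrow> src (ps ! i) \<in> D"
  shows "comp_cover_split T ps (U, f) \<in> (SIGMA \<sigma>:T \<rightarrow>\<^sub>E D. factor_covers ps qs T \<tau> \<sigma>)"
    and "comp_cover_join T (comp_cover_split T ps (U, f)) = (U, f)"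
proof -
  from f have fU: "\<And>t. t \<in> T \<Longrightarrow> f t \<in> U \<and> ends (comp_passage ps qs (f t)) = \<tau> t"
    and fE: "\<And>t. t \<notin> T \<Longrightarrow> f t = undefined" and fim: "f ` T = U"
    by (simp_all add: mem_covers)
  from U have U_comp: "\<And>i j. (i, j) \<in> U \<Longrightarrow> i < length ps \<and> j < length qs \<and> src (ps ! i) = tgt (qs ! j)"
    and U_fst: "fst ` U = {..<length ps}" and U_snd: "snd ` U = {..<length qs}"
    by (auto simp: comp_index_sets_def)
  have ft: "fst (f t) < length ps \<and> snd (f t) < length qs \<and> src (ps ! fst (f t)) = tgt (qs ! snd (f t)) \<and>
      src (qs ! snd (f t)) = fst (\<tau> t) \<and> tgt (ps ! fst (f t)) = snd (\<tau> t)" if "t \<in> T" for t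
    using fU[OF that] U_comp by (cases "f t", cases "\<tau> t") auto
  have "(\<lambda>t\<in>T. fst (f t)) ` T = fst ` U" "(\<lambda>t\<in>T. snd (f t)) ` T = snd ` U"
    using fim by (force simp: image_image)+
  then show "comp_cover_split T ps (U, f) \<in> (SIGMA \<sigma>:T \<rightarrow>\<^sub>E D. factor_covers ps qs T \<tau> \<sigma>)"
    using ft D U_fst U_snd by (auto simp: comp_cover_split_def mem_covers ends_def)
  have "(\<lambda>t\<in>T. ((\<lambda>t\<in>T. fst (f t)) t, (\<lambda>t\<in>T. snd (f t)) t)) = f"
    using fE by (auto intro!: ext)
  then show "comp_cover_join T (comp_cover_split T ps (U, f)) = (U, f)"
    using fim by (simp only: comp_cover_join_def comp_cover_split_def prod.case)
qed

lemma comp_cover_join_in_covers: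
  assumes \<sigma>: "\<sigma> \<in> T \<rightarrow>\<^sub>E D" and gh: "(g, h) \<in> factor_covers ps qs T \<tau> \<sigma>"
  shows "comp_cover_join T (\<sigma>, g, h) \<in> (SIGMA U:comp_index_sets ps qs. covers U (comp_passage ps qs) T \<tau>)"
    and "comp_cover_split T ps (comp_cover_join T (\<sigma>, g, h)) = (\<sigma>, g, h)"
proof -
  from gh have gT: "\<And>t. t \<in> T \<Longrightarrow> g t < length ps \<and> src (ps ! g t) = \<sigma> t \<and> tgt (ps ! g t) = snd (\<tau> t)"
    and gE: "\<And>t. t \<notin> T \<Longrightarrow> g t = undefined" and gim: "g ` T = {..<length ps}"
    and hT: "\<And>t. t \<in> T \<Longrightarrow> h t < length qs \<and> src (qs ! h t) = fst (\<tau> t) \<and> tgt (qs ! h t) = \<sigma> t"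
    and hE: "\<And>t. t \<notin> T \<Longrightarrow> h t = undefined" and him: "h ` T = {..<length qs}"
    by (auto simp: mem_covers ends_def)
  define f where "f = (\<lambda>t\<in>T. (g t, h t))"
  have "fst ` f ` T = g ` T" "snd ` f ` T = h ` T"
    by (force simp: f_def image_image)+
  then have "f ` T \<in> comp_index_sets ps qs"
    using gT hT gim him by (auto simp: comp_index_sets_def f_def)
  moreover have "f \<in> covers (f ` T) (comp_passage ps qs) T \<tau>"
    using gT hT by (auto simp: mem_covers f_def)
  ultimately show "comp_cover_join T (\<sigma>, g, h) \<in> (SIGMA U:comp_index_sets ps qs. covers U (comp_passage ps qs) T \<tau>)"
    by (simp add: comp_cover_join_def f_def)
  show "comp_cover_split T ps (comp_cover_join T (\<sigma>, g, h)) = (\<sigma>, g, h)"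
    using \<sigma> by (auto simp: comp_cover_split_def comp_cover_join_def gT gE hE PiE_iff extensional_def intro!: ext)
qed

lemma sum_covers_comp_index_sets:
  fixes ps qs :: "('a, 'b::comm_ring_1) passage list" and T :: "'t set"
  assumes D: "\<And>i. i < length ps \<Longrightarrow> src (ps ! i) \<in> D"
  shows "(\<Sum>(U, f)\<in>(SIGMA U:comp_index_sets ps qs. covers U (comp_passage ps qs) T \<tau>).
      \<Prod>t\<in>T. lbl (comp_passage ps qs (f t))) =
    (\<Sum>(\<sigma>, g, h)\<in>(SIGMA \<sigma>:T \<rightarrow>\<^sub>E D. factor_covers ps qs T \<tau> \<sigma>).
      (\<Prod>t\<in>T. lbl (ps ! g t)) * (\<Prod>t\<in>T. lbl (qs ! h t)))"
proof (rule sum.reindex_bij_witness[of _ "comp_cover_join T" "comp_cover_split T ps"])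
  fix a assume "a \<in> (SIGMA U:comp_index_sets ps qs. covers U (comp_passage ps qs) T \<tau>)"
  then obtain U f where a: "a = (U, f)" "U \<in> comp_index_sets ps qs" "f \<in> covers U (comp_passage ps qs) T \<tau>"
    by auto
  show "comp_cover_join T (comp_cover_split T ps a) = a"
    and "comp_cover_split T ps a \<in> (SIGMA \<sigma>:T \<rightarrow>\<^sub>E D. factor_covers ps qs T \<tau> \<sigma>)"
    unfolding a(1) using comp_cover_split_in_factor_covers[OF a(2,3) D] by blast+
  show "(case comp_cover_split T ps a of (\<sigma>, g, h) \<Rightarrow> (\<Prod>t\<in>T. lbl (ps ! g t)) * (\<Prod>t\<in>T. lbl (qs ! h t))) =
      (case a of (U, f) \<Rightarrow> \<Prod>t\<in>T. lbl (comp_passage ps qs (f t)))"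
    by (simp add: comp_cover_split_def a prod.distrib[symmetric] case_prod_unfold cong: prod.cong)
next
  fix b assume "b \<in> (SIGMA \<sigma>:T \<rightarrow>\<^sub>E D. factor_covers ps qs T \<tau> \<sigma>)"
  then obtain \<sigma> g h where b: "b = (\<sigma>, g, h)" "\<sigma> \<in> T \<rightarrow>\<^sub>E D" "(g, h) \<in> factor_covers ps qs T \<tau> \<sigma>"
    by auto
  show "comp_cover_split T ps (comp_cover_join T b) = b"
    and "comp_cover_join T b \<in> (SIGMA U:comp_index_sets ps qs. covers U (comp_passage ps qs) T \<tau>)"
    unfolding b(1) using comp_cover_join_in_covers[OF b(2,3)] by blast+
qed

lemma mset_maze_list: "mset (maze_list P) = P"
  unfolding maze_list_def by (rule someI_ex) (rule ex_mset)

definition maze_weight :: "('a, 'b::comm_ring_1) maze \<Rightarrow> 't set \<Rightarrow> ('t \<Rightarrow> 'a \<times> 'a) \<Rightarrow> 'b" where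
  "maze_weight M T \<tau> = ariadne_coeff (maze_list M) (image_mset \<tau> (mset_set T))"

lemma maze_weight_eq_cover_weight:
  assumes "finite I" and "finite T" and "M = image_mset \<pi> (mset_set I)"
  shows "maze_weight M T \<tau> = cover_weight I \<pi> T \<tau>"
  using assms by (simp add: maze_weight_def cover_weight_eq_ariadne_coeff[symmetric]
      cover_weight_mset_eq mset_maze_list)

lemma maze_weight_eq_sum_covers:
  assumes "finite T"
  shows "maze_weight P T \<tau> =
    (\<Sum>g\<in>covers {..<length (maze_list P)} (\<lambda>i. maze_list P ! i) T \<tau>. \<Prod>t\<in>T. lbl (maze_list P ! g t))"
  using assms by (simp add: maze_weight_def cover_weight_eq_ariadne_coeff[symmetric] cover_weight_def)

lemma sum_maze_weight_comp_result:
  fixes P Q :: "('a, 'b::comm_ring_1) maze"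
  assumes fT: "finite T" and fD: "finite D" and D: "src ` set_mset P \<subseteq> D"
  shows "(\<Sum>U\<in>comp_index_sets (maze_list P) (maze_list Q). maze_weight (comp_result (maze_list P) (maze_list Q) U) T \<tau>)
    = (\<Sum>\<sigma>\<in>T \<rightarrow>\<^sub>E D. maze_weight P T (\<lambda>t. (\<sigma> t, snd (\<tau> t))) * maze_weight Q T (\<lambda>t. (fst (\<tau> t), \<sigma> t)))"
proof -
  define ps where "ps = maze_list P"
  define qs where "qs = maze_list Q"
  have ps_D: "src (ps ! i) \<in> D" if "i < length ps" for i
    using D nth_mem[OF that] mset_maze_list[of P] unfolding ps_def by (metis image_subset_iff set_mset_mset)
  have "(\<Sum>U\<in>comp_index_sets ps qs. maze_weight (comp_result ps qs U) T \<tau>) =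
      (\<Sum>U\<in>comp_index_sets ps qs. cover_weight U (comp_passage ps qs) T \<tau>)"
    using fT by (intro sum.cong refl maze_weight_eq_cover_weight)
      (simp_all add: finite_comp_index_set comp_result_eq)
  also have "\<dots> = (\<Sum>(U, f)\<in>(SIGMA U:comp_index_sets ps qs. covers U (comp_passage ps qs) T \<tau>).
      \<Prod>t\<in>T. lbl (comp_passage ps qs (f t)))"
    unfolding cover_weight_def
    by (rule sum.Sigma) (use fT in \<open>auto intro: finite_covers finite_comp_index_set finite_comp_index_sets\<close>)
  also have "\<dots> = (\<Sum>(\<sigma>, g, h)\<in>(SIGMA \<sigma>:T \<rightarrow>\<^sub>E D. factor_covers ps qs T \<tau> \<sigma>).
      (\<Prod>t\<in>T. lbl (ps ! g t)) * (\<Prod>t\<in>T. lbl (qs ! h t)))"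
    by (rule sum_covers_comp_index_sets[OF ps_D])
  also have "\<dots> = (\<Sum>\<sigma>\<in>T \<rightarrow>\<^sub>E D. \<Sum>(g, h)\<in>factor_covers ps qs T \<tau> \<sigma>.
      (\<Prod>t\<in>T. lbl (ps ! g t)) * (\<Prod>t\<in>T. lbl (qs ! h t)))"
    by (rule sum.Sigma[symmetric]) (use fT fD in \<open>auto intro!: finite_covers finite_PiE\<close>)
  also have "\<dots> = (\<Sum>\<sigma>\<in>T \<rightarrow>\<^sub>E D. maze_weight P T (\<lambda>t. (\<sigma> t, snd (\<tau> t))) * maze_weight Q T (\<lambda>t. (fst (\<tau> t), \<sigma> t)))"
    using fT by (simp add: maze_weight_eq_sum_covers ps_def qs_def sum_product sum.cartesian_product)
  finally show ?thesis by (simp add: ps_def qs_def)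
qed

definition laby_weight :: "('a, 'b::comm_ring_1) laby \<Rightarrow> 't set \<Rightarrow> ('t \<Rightarrow> 'a \<times> 'a) \<Rightarrow> 'b" where
  "laby_weight F T \<tau> = (\<Sum>M\<in>supp F. F M * maze_weight M T \<tau>)"

lemma laby_weight_superset:
  assumes "finite S" "supp F \<subseteq> S"
  shows "laby_weight F T \<tau> = (\<Sum>M\<in>S. F M * maze_weight M T \<tau>)"
  unfolding laby_weight_def by (rule sum.mono_neutral_left) (use assms in \<open>auto simp: supp_def\<close>)

definition comp_mazes :: "('a, 'b::comm_ring_1) laby \<Rightarrow> ('a, 'b) laby \<Rightarrow> ('a, 'b) maze set" where
  "comp_mazes F G = (\<Union>P\<in>supp F. \<Union>Q\<in>supp G.
     comp_result (maze_list P) (maze_list Q) ` comp_index_sets (maze_list P) (maze_list Q))"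

lemma finite_comp_mazes: "finite (supp F) \<Longrightarrow> finite (supp G) \<Longrightarrow> finite (comp_mazes F G)"
  unfolding comp_mazes_def by (intro finite_UN_I finite_imageI finite_comp_index_sets)

lemma maze_comp_eq_0: "M \<notin> comp_result (maze_list P) (maze_list Q) ` comp_index_sets (maze_list P) (maze_list Q) \<Longrightarrow>
    maze_comp P Q M = 0"
  unfolding maze_comp_def by (metis (mono_tags, lifting) card.empty empty_Collect_eq image_eqI of_nat_0)

lemma supp_laby_comp_subset: "supp (laby_comp F G) \<subseteq> comp_mazes F G"
proof
  fix M assume "M \<in> supp (laby_comp F G)"
  then have "laby_comp F G M \<noteq> 0"
    by (simp add: supp_def)
  then obtain P Q where "P \<in> supp F" "Q \<in> supp G" "maze_comp P Q M \<noteq> 0"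
    unfolding laby_comp_def by (metis (no_types, lifting) mult_zero_right sum.neutral)
  then show "M \<in> comp_mazes F G"
    unfolding comp_mazes_def using maze_comp_eq_0 by blast
qed

lemma finite_supp_laby_comp:
  "finite (supp F) \<Longrightarrow> finite (supp G) \<Longrightarrow> finite (supp (laby_comp F G))"
  using finite_subset[OF supp_laby_comp_subset finite_comp_mazes] .

lemma sum_maze_comp_maze_weight:
  assumes "finite S" and "comp_result (maze_list P) (maze_list Q) ` comp_index_sets (maze_list P) (maze_list Q) \<subseteq> S"
  shows "(\<Sum>M\<in>S. maze_comp P Q M * maze_weight M T \<tau>) =
    (\<Sum>U\<in>comp_index_sets (maze_list P) (maze_list Q). maze_weight (comp_result (maze_list P) (maze_list Q) U) T \<tau>)"
proof -
  have "(\<Sum>M\<in>S. maze_comp P Q M * maze_weight M T \<tau>) =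
      (\<Sum>M\<in>S. \<Sum>U\<in>{U \<in> comp_index_sets (maze_list P) (maze_list Q). comp_result (maze_list P) (maze_list Q) U = M}.
        maze_weight (comp_result (maze_list P) (maze_list Q) U) T \<tau>)"
    by (intro sum.cong refl) (simp add: maze_comp_def)
  also have "\<dots> = (\<Sum>U\<in>comp_index_sets (maze_list P) (maze_list Q). maze_weight (comp_result (maze_list P) (maze_list Q) U) T \<tau>)"
    by (rule sum.group) (use assms finite_comp_index_sets in auto)
  finally show ?thesis .
qed

lemma laby_weight_comp:
  fixes F G :: "('a, 'b::comm_ring_1) laby"
  assumes fF: "finite (supp F)" and fG: "finite (supp G)" and fT: "finite T"
  defines "D \<equiv> (\<Union>P\<in>supp F. src ` set_mset P)"
  shows "laby_weight (laby_comp F G) T \<tau> =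
    (\<Sum>\<sigma>\<in>T \<rightarrow>\<^sub>E D. laby_weight F T (\<lambda>t. (\<sigma> t, snd (\<tau> t))) * laby_weight G T (\<lambda>t. (fst (\<tau> t), \<sigma> t)))"
proof -
  define S where "S = comp_mazes F G"
  have fS: "finite S" using finite_comp_mazes[OF fF fG] by (simp add: S_def)
  have fD: "finite D" unfolding D_def using fF by blast
  have "laby_weight (laby_comp F G) T \<tau> = (\<Sum>M\<in>S. laby_comp F G M * maze_weight M T \<tau>)"
    by (rule laby_weight_superset[OF fS]) (simp add: S_def supp_laby_comp_subset)
  also have "\<dots> = (\<Sum>P\<in>supp F. \<Sum>Q\<in>supp G. F P * G Q * (\<Sum>M\<in>S. maze_comp P Q M * maze_weight M T \<tau>))"
    by (simp add: laby_comp_def sum_distrib_left sum_distrib_right mult.assoc sum.swap[of _ S])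
  also have "\<dots> = (\<Sum>P\<in>supp F. \<Sum>Q\<in>supp G. F P * G Q *
      (\<Sum>\<sigma>\<in>T \<rightarrow>\<^sub>E D. maze_weight P T (\<lambda>t. (\<sigma> t, snd (\<tau> t))) * maze_weight Q T (\<lambda>t. (fst (\<tau> t), \<sigma> t))))"
  proof (intro sum.cong refl)
    fix P Q assume P: "P \<in> supp F" and Q: "Q \<in> supp G"
    have "(\<Sum>M\<in>S. maze_comp P Q M * maze_weight M T \<tau>) = (\<Sum>U\<in>comp_index_sets (maze_list P) (maze_list Q).
        maze_weight (comp_result (maze_list P) (maze_list Q) U) T \<tau>)"
      by (rule sum_maze_comp_maze_weight[OF fS]) (use P Q in \<open>auto simp: S_def comp_mazes_def\<close>)
    also have "\<dots> = (\<Sum>\<sigma>\<in>T \<rightarrow>\<^sub>E D. maze_weight P T (\<lambda>t. (\<sigma> t, snd (\<tau> t))) * maze_weight Q T (\<lambda>t. (fst (\<tau> t), \<sigma> t)))"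
      by (rule sum_maze_weight_comp_result[OF fT fD]) (use P in \<open>auto simp: D_def\<close>)
    finally show "F P * G Q * (\<Sum>M\<in>S. maze_comp P Q M * maze_weight M T \<tau>) = F P * G Q *
      (\<Sum>\<sigma>\<in>T \<rightarrow>\<^sub>E D. maze_weight P T (\<lambda>t. (\<sigma> t, snd (\<tau> t))) * maze_weight Q T (\<lambda>t. (fst (\<tau> t), \<sigma> t)))"
      by simp
  qed
  also have "\<dots> = (\<Sum>\<sigma>\<in>T \<rightarrow>\<^sub>E D. \<Sum>P\<in>supp F. \<Sum>Q\<in>supp G.
      F P * maze_weight P T (\<lambda>t. (\<sigma> t, snd (\<tau> t))) * (G Q * maze_weight Q T (\<lambda>t. (fst (\<tau> t), \<sigma> t))))"
    by (simp add: sum_distrib_left mult_ac sum.swap[of _ "T \<rightarrow>\<^sub>E D"])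
  also have "\<dots> = (\<Sum>\<sigma>\<in>T \<rightarrow>\<^sub>E D. laby_weight F T (\<lambda>t. (\<sigma> t, snd (\<tau> t))) * laby_weight G T (\<lambda>t. (fst (\<tau> t), \<sigma> t)))"
    by (simp only: laby_weight_def sum_product)
  finally show ?thesis .
qed

section \<open>The relations defining the truncated maze category\<close>

lemma supp_maze_comb: "supp (maze_comb P :: ('a, 'b::zero_neq_one) laby) = {P}"
  by (auto simp: supp_def maze_comb_def)

lemma sum_maze_comb:
  assumes "finite S" and "P \<in> S"
  shows "(\<Sum>M\<in>S. maze_comb P M * f M) = (f P :: 'b::comm_ring_1)"
proof -
  have "(\<Sum>M\<in>S. maze_comb P M * f M) = (\<Sum>M\<in>S. if M = P then f M else 0)"
    by (rule sum.cong) (auto simp: maze_comb_def)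
  with assms show ?thesis
    by simp
qed

lemma laby_weight_maze_comb: "laby_weight (maze_comb P) T \<tau> = maze_weight P T \<tau>"
  by (simp add: laby_weight_def supp_maze_comb maze_comb_def)

lemma maze_weight_eq_0_if_card_less:
  assumes "finite T" and "card T < size P"
  shows "maze_weight P T \<tau> = 0"
  unfolding maze_weight_def
  by (rule ariadne_coeff_eq_0_if_size_less) (use assms in \<open>simp add: size_mset[symmetric] mset_maze_list\<close>)

lemma supp_rel_IV_subset:
  "supp (rel_IV n P) \<subseteq> insert P (unit_maze (maze_list P) ` assignments n (maze_list P))"
proof (rule subsetI, rule ccontr)
  fix M assume M: "M \<in> supp (rel_IV n P)" and "M \<notin> insert P (unit_maze (maze_list P) ` assignments n (maze_list P))"
  then have "rel_IV n P M = 0"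
    by (auto simp: rel_IV_def maze_comb_def intro!: sum.neutral)
  with M show False
    by (simp add: supp_def)
qed

lemma finite_supp_rel_IV: "finite (supp (rel_IV n P))"
  by (rule finite_subset[OF supp_rel_IV_subset]) (simp add: finite_assignments)

lemma laby_weight_rel_IV:
  fixes P :: "('a, 'b::binomial_ring) maze"
  assumes fT: "finite T" and card: "card T \<le> n"
  shows "laby_weight (rel_IV n P) T \<tau> = 0"
proof -
  define ps where "ps = maze_list P"
  define \<mu> where "\<mu> = image_mset \<tau> (mset_set T)"
  define A where "A = assignments n ps"
  define c where "c ds = (\<Prod>(p, d)\<leftarrow>zip ps ds. bchoose (lbl p) d)" for ds
  define S where "S = insert P (unit_maze ps ` A)"
  have fS: "finite S"
    by (simp add: S_def A_def finite_assignments)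
  have unit: "maze_weight (unit_maze ps ds) T \<tau> = ariadne_coeff (unit_passages ps ds) \<mu>" for ds
    unfolding maze_weight_def \<mu>_def[symmetric]
    by (rule ariadne_coeff_mset_eq) (simp add: mset_maze_list unit_maze_eq_mset_unit_passages)
  have "laby_weight (rel_IV n P) T \<tau> = (\<Sum>M\<in>S. rel_IV n P M * maze_weight M T \<tau>)"
    by (rule laby_weight_superset[OF fS]) (use supp_rel_IV_subset in \<open>simp add: S_def A_def ps_def\<close>)
  also have "\<dots> = (\<Sum>M\<in>S. maze_comb P M * maze_weight M T \<tau>) -
      (\<Sum>ds\<in>A. c ds * (\<Sum>M\<in>S. maze_comb (unit_maze ps ds) M * maze_weight M T \<tau>))"
    by (simp add: rel_IV_def A_def c_def ps_def algebra_simps sum_subtractf sum_distrib_left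
        sum_distrib_right sum.swap[of _ S])
  also have "\<dots> = ariadne_coeff ps \<mu> - (\<Sum>ds\<in>A. c ds * ariadne_coeff (unit_passages ps ds) \<mu>)"
    using fS by (simp add: sum_maze_comb S_def unit) (simp add: maze_weight_def ps_def \<mu>_def)
  also have "\<dots> = 0"
    using ariadne_coeff_unit_expansion[of \<mu> n ps] fT card by (simp add: \<mu>_def A_def c_def)
  finally show ?thesis .
qed

lemma finite_supp_laby_n_rel: "R \<in> laby_n_rel n X Y \<Longrightarrow> finite (supp R)"
  by (auto simp: laby_n_rel_def supp_maze_comb finite_supp_rel_IV)

lemma laby_weight_laby_n_rel:
  fixes R :: "('a, 'b::binomial_ring) laby"
  assumes "R \<in> laby_n_rel n X Y" and "finite T" and "card T = n"
  shows "laby_weight R T \<tau> = 0"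
  using assms by (auto simp: laby_n_rel_def laby_weight_maze_comb laby_weight_rel_IV
      maze_weight_eq_0_if_card_less)

lemma ariadne_mor_eq_laby_weight:
  assumes "mset ts = \<mu>" and "length ts = n"
  shows "ariadne_mor n H \<mu> = laby_weight H {..<n} (\<lambda>k. ts ! k)"
proof -
  have "image_mset (\<lambda>k. ts ! k) (mset_set {..<n}) = \<mu>"
    using image_mset_nth_mset_set[of ts] assms by simp
  moreover have "size \<mu> = n"
    using assms by auto
  ultimately show ?thesis
    by (simp add: ariadne_mor_def laby_weight_def maze_weight_def ariadne_eq_ariadne_coeff)
qed

lemma ariadne_mor_eq_0_if_laby_weight_eq_0:
  assumes "\<And>\<tau>. laby_weight H {..<n} \<tau> = 0"
  shows "ariadne_mor n H = (\<lambda>\<mu>. 0)"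
proof
  fix \<mu> :: "'a multation"
  show "ariadne_mor n H \<mu> = 0"
  proof (cases "size \<mu> = n")
    case True
    obtain ts where ts: "mset ts = \<mu>"
      using ex_mset by blast
    with True have "length ts = n"
      by auto
    with ts assms show ?thesis
      by (simp add: ariadne_mor_eq_laby_weight)
  next
    case False
    then show ?thesis
      by (simp add: ariadne_mor_def ariadne_eq_ariadne_coeff)
  qed
qed

theorem mainTheorem9:
  fixes n :: nat
    and W X Y Z :: "'a set"
    and F G R :: "('a, 'b::binomial_ring) laby"
  assumes "laby_mor W X G"
    and "laby_mor Y Z F"
    and "R \<in> laby_n_rel n X Y"
  shows "ariadne_mor n (laby_comp F (laby_comp R G)) = (\<lambda>mu. 0)"
proof (rule ariadne_mor_eq_0_if_laby_weight_eq_0)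
  have fF: "finite (supp F)" and fG: "finite (supp G)" and fR: "finite (supp R)"
    using assms finite_supp_laby_n_rel by (auto simp: laby_mor_def)
  have RG: "laby_weight (laby_comp R G) {..<n} \<tau> = 0" for \<tau> :: "nat \<Rightarrow> 'a \<times> 'a"
    using assms(3) by (simp add: laby_weight_comp[OF fR fG] laby_weight_laby_n_rel)
  fix \<tau> :: "nat \<Rightarrow> 'a \<times> 'a"
  show "laby_weight (laby_comp F (laby_comp R G)) {..<n} \<tau> = 0"
    by (simp add: laby_weight_comp[OF fF finite_supp_laby_comp[OF fR fG]] RG)
qed

end
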